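(* Let $f$ be convex and differentiable with $L$-Lipschitz gradient, $h$ proper closed convex, $F=f+h$, $\mathbf{x}^*$ a minimizer of $F$, $\alpha>0$ with $\alpha L\le1$, and $\varepsilon\ge0$. Let $\mathbf{x}^{(k-1)},\mathbf{v}^{(k)},\mathbf{e}^{(k)}\in\mathbb{R}^d$ with $\|\mathbf{v}^{(k)}-\nabla f(\mathbf{x}^{(k-1)})\|\le M$, let $\mathbf{q}^{(k)}=\mathbf{x}^{(k-1)}-\alpha(\mathbf{v}^{(k)}+\mathbf{e}^{(k)})$, and let $\mathbf{x}^{(k)}$ be an $\varepsilon$-inexact proximal point of $\mathbf{q}^{(k)}$. Let $\mathbf{g}$ satisfy $\frac1\alpha(\mathbf{q}^{(k)}+\mathbf{g}-\mathbf{x}^{(k)})\in\partial_\varepsilon h(\mathbf{x}^{(k)})$ and $\|\mathbf{g}\|\le\sqrt{2\alpha\varepsilon}$, let $\boldsymbol{\xi}^{(k-1)}=\frac1\alpha(\mathbf{x}^{(k-1)}-\mathbf{x}^{(k)})$, and let $\underline{\mathbf{x}}$ be an $\varepsilon$-inexact proximal point of $\mathbf{x}^{(k-1)}-\alpha\nabla f(\mathbf{x}^{(k-1)})$. Then $$-\alpha^2\|\boldsymbol{\xi}^{(k-1)}\|^2-2\alpha\langle\boldsymbol{\xi}^{(k-1)},\mathbf{x}^{(k)}-\mathbf{x}^*\rangle\le-2\alpha\big(F(\mathbf{x}^{(k)})-F(\mathbf{x}^* )\big)+2\alpha\varepsilon+2\alpha^2\|\mathbf{v}^{(k)}-\nabla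 f(\mathbf{x}^{(k-1)})\|^2+\big(2\alpha^2\|\mathbf{e}^{(k)}\|+6\alpha\sqrt{2\alpha\varepsilon}\big)M-2\alpha\langle\mathbf{x}^{(k)}-\mathbf{x}^*,\mathbf{e}^{(k)}-\tfrac1\alpha\mathbf{g}\rangle-2\alpha\langle\underline{\mathbf{x}}-\mathbf{x}^*,\mathbf{v}^{(k)}-\nabla f(\mathbf{x}^{(k-1)})\rangle.$$
   Context: A point $\mathbf{x}$ is an $\varepsilon$-inexact proximal point of $\mathbf{z}$ (with parameter $\alpha$) if $\frac1{2\alpha}\|\mathbf{x}-\mathbf{z}\|^2+h(\mathbf{x})\le\min_{\mathbf{y}}\{\frac1{2\alpha}\|\mathbf{y}-\mathbf{z}\|^2+h(\mathbf{y})\}+\varepsilon$. The $\varepsilon$-subdifferential is $\partial_\varepsilon h(\mathbf{x})=\{\mathbf{p}: h(\mathbf{y})\ge h(\mathbf{x})+\langle\mathbf{p},\mathbf{y}-\mathbf{x}\rangle-\varepsilon\ \forall\mathbf{y}\}$. *)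

theory Defs
  imports "HOL-Analysis.Analysis" "HOL-Library.Extended_Real"
begin

definition proper_fun :: "('a \<Rightarrow> ereal) \<Rightarrow> bool" where
  "proper_fun h \<longleftrightarrow> (\<forall>x. h x \<noteq> -\<infinity>) \<and> (\<exists>x. h x \<noteq> \<infinity>)"

definition epigraph_e :: "('a \<Rightarrow> ereal) \<Rightarrow> ('a \<times> real) set" where
  "epigraph_e h = {(x, t). h x \<le> ereal t}"

definition closed_fun :: "('a::topological_space \<Rightarrow> ereal) \<Rightarrow> bool" where
  "closed_fun h \<longleftrightarrow> closed (epigraph_e h)"

definition convex_fun :: "('a::real_vector \<Rightarrow> ereal) \<Rightarrow> bool" where
  "convex_fun h \<longleftrightarrow> convex (epigraph_e h)"

definition inexact_prox ::
  "('a::real_normed_vector \<Rightarrow> ereal) \<Rightarrow> real \<Rightarrow> real \<Rightarrow> 'a \<Rightarrow> 'a \<Rightarrow> bool" where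
  "inexact_prox h \<alpha> \<epsilon> z x \<longleftrightarrow>
     ereal (1 / (2 * \<alpha>) * (norm (x - z))\<^sup>2) + h x
       \<le> (INF y. ereal (1 / (2 * \<alpha>) * (norm (y - z))\<^sup>2) + h y) + ereal \<epsilon>"

definition eps_subdiff :: "('a::real_inner \<Rightarrow> ereal) \<Rightarrow> real \<Rightarrow> 'a \<Rightarrow> 'a set" where
  "eps_subdiff h \<epsilon> x = {p. \<forall>y. h y \<ge> h x + ereal (inner p (y - x) - \<epsilon>)}"

end

theory Submission
  imports Defs
begin

text \<open>
  The descent lemma for \<open>f\<close> at \<open>xprev\<close>, the gradient inequality for \<open>f\<close> at \<open>xs\<close> and the
  \<open>\<epsilon>\<close>-subgradient inequality for \<open>h\<close> at \<open>xk\<close> bound \<open>F xk - F xs\<close> by the terms of the claim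
  plus the cross term \<open>\<langle>v - \<nabla>f(xprev), xu - xk\<rangle>\<close>. That term is controlled by an approximate
  nonexpansiveness of inexact proximal points: if \<open>u\<close> is an \<open>\<epsilon>\<close>-inexact proximal point of \<open>z\<close>
  and \<open>p \<in> \<partial>\<^sub>\<epsilon>h(x)\<close>, then \<open>\<parallel>u - x\<parallel> \<le> \<parallel>x + \<alpha>p - z\<parallel> + 2\<surd>(2\<alpha>\<epsilon>)\<close>. This follows by testing the
  proximal inequality of \<open>u\<close> against the points of the segment from \<open>u\<close> to \<open>x\<close> and choosing
  the position on the segment optimally.
\<close>

lemma has_real_derivative_along_line:
  fixes f :: "'a::real_inner \<Rightarrow> real"
  assumes "\<And>x. (f has_derivative (\<lambda>u. inner (gf x) u)) (at x)"
  shows "((\<lambda>t. f (x + t *\<^sub>R d)) has_real_derivative inner (gf (x + t *\<^sub>R d)) d) (at t)"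
proof -
  have "((\<lambda>t. x + t *\<^sub>R d) has_derivative (\<lambda>s. s *\<^sub>R d)) (at t)"
    by (auto intro!: derivative_eq_intros)
  from diff_chain_at[OF this assms]
  have "((\<lambda>t. f (x + t *\<^sub>R d)) has_derivative (\<lambda>s. s * inner (gf (x + t *\<^sub>R d)) d)) (at t)"
    by (simp add: o_def)
  then show ?thesis
    unfolding has_field_derivative_def by (rule has_derivative_eq_rhs) (auto simp: mult.commute)
qed

lemma lipschitz_gradient_upper_bound:
  fixes f :: "'a::real_inner \<Rightarrow> real"
  assumes f_grad: "\<And>x. (f has_derivative (\<lambda>u. inner (gf x) u)) (at x)"
    and lip: "L-lipschitz_on UNIV gf"
  shows "f y \<le> f x + inner (gf x) (y - x) + L / 2 * (norm (y - x))\<^sup>2"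
proof -
  define d where "d = y - x"
  define \<psi> where "\<psi> t = f (x + t *\<^sub>R d) - t * inner (gf x) d - L / 2 * t\<^sup>2 * (norm d)\<^sup>2" for t
  have "\<psi> 1 \<le> \<psi> 0"
  proof (rule DERIV_nonpos_imp_nonincreasing[of 0 1 \<psi>])
    fix t :: real assume t: "0 \<le> t" "t \<le> 1"
    have "(\<psi> has_real_derivative
        inner (gf (x + t *\<^sub>R d)) d - inner (gf x) d - L * t * (norm d)\<^sup>2) (at t)"
      unfolding \<psi>_def by (auto intro!: derivative_eq_intros has_real_derivative_along_line[OF f_grad])
    moreover have "inner (gf (x + t *\<^sub>R d)) d - inner (gf x) d \<le> L * t * (norm d)\<^sup>2"
    proof -
      have "inner (gf (x + t *\<^sub>R d)) d - inner (gf x) d \<le> norm (gf (x + t *\<^sub>R d) - gf x) * norm d"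
        by (metis inner_diff_left norm_cauchy_schwarz)
      also have "\<dots> \<le> L * dist (x + t *\<^sub>R d) x * norm d"
        using lipschitz_onD[OF lip, of "x + t *\<^sub>R d" x] by (simp add: dist_norm mult_right_mono)
      also have "\<dots> = L * t * (norm d)\<^sup>2"
        using t by (simp add: dist_norm power2_eq_square)
      finally show ?thesis .
    qed
    ultimately show "\<exists>y. (\<psi> has_real_derivative y) (at t) \<and> y \<le> 0"
      by auto
  qed simp
  then show ?thesis
    by (simp add: \<psi>_def d_def)
qed

lemma convex_gradient_lower_bound:
  fixes f :: "'a::real_inner \<Rightarrow> real"
  assumes f_convex: "convex_on UNIV f"
    and f_grad: "\<And>x. (f has_derivative (\<lambda>u. inner (gf x) u)) (at x)"
  shows "f x + inner (gf x) (y - x) \<le> f y"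
proof -
  define d where "d = y - x"
  define \<phi> where "\<phi> t = f (x + t *\<^sub>R d)" for t
  have "convex_on UNIV \<phi>"
  proof (rule convex_onI)
    fix t a b :: real assume "t > 0" "t < 1"
    have "\<phi> ((1 - t) *\<^sub>R a + t *\<^sub>R b) = f ((1 - t) *\<^sub>R (x + a *\<^sub>R d) + t *\<^sub>R (x + b *\<^sub>R d))"
      by (simp add: \<phi>_def algebra_simps)
    also have "\<dots> \<le> (1 - t) * \<phi> a + t * \<phi> b"
      unfolding \<phi>_def using \<open>t > 0\<close> \<open>t < 1\<close> by (intro convex_onD[OF f_convex]) auto
    finally show "\<phi> ((1 - t) *\<^sub>R a + t *\<^sub>R b) \<le> (1 - t) * \<phi> a + t * \<phi> b" .
  qed simp
  moreover have "(\<phi> has_real_derivative inner (gf x) d) (at 0 within UNIV)"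
    unfolding \<phi>_def using has_real_derivative_along_line[OF f_grad, of x d 0] by simp
  ultimately have "inner (gf x) d * (1 - 0) \<le> \<phi> 1 - \<phi> 0"
    by (intro convex_on_imp_above_tangent) auto
  then show ?thesis
    by (simp add: \<phi>_def d_def)
qed

lemma convex_fun_le_combination:
  assumes "convex_fun h" "h a \<le> ereal ha" "h b \<le> ereal hb" "0 \<le> t" "t \<le> 1"
  shows "h ((1 - t) *\<^sub>R a + t *\<^sub>R b) \<le> ereal ((1 - t) * ha + t * hb)"
proof -
  have "(1 - t) *\<^sub>R (a, ha) + t *\<^sub>R (b, hb) \<in> epigraph_e h"
    using assms unfolding convex_fun_def by (intro convexD) (auto simp: epigraph_e_def)
  then show ?thesis
    by (simp add: epigraph_e_def)
qed

lemma proper_funE: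
  assumes "proper_fun h" "h x \<noteq> \<infinity>"
  obtains c where "h x = ereal c"
  using assms by (cases "h x") (auto simp: proper_fun_def)

lemma eps_subdiff_not_infinity:
  assumes "proper_fun h" "p \<in> eps_subdiff h \<epsilon> x"
  shows "h x \<noteq> \<infinity>"
proof
  assume "h x = \<infinity>"
  obtain y where "h y \<noteq> \<infinity>"
    using assms(1) by (auto simp: proper_fun_def)
  moreover have "h x + ereal (inner p (y - x) - \<epsilon>) \<le> h y"
    using assms(2) by (simp add: eps_subdiff_def)
  ultimately show False
    using \<open>h x = \<infinity>\<close> by simp
qed

lemma inexact_proxD:
  assumes "inexact_prox h \<alpha> \<epsilon> z u"
  shows "ereal (1 / (2 * \<alpha>) * (norm (u - z))\<^sup>2) + h u
    \<le> ereal (1 / (2 * \<alpha>) * (norm (y - z))\<^sup>2) + h y + ereal \<epsilon>"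
proof -
  have "ereal (1 / (2 * \<alpha>) * (norm (u - z))\<^sup>2) + h u
      \<le> (INF y. ereal (1 / (2 * \<alpha>) * (norm (y - z))\<^sup>2) + h y) + ereal \<epsilon>"
    using assms by (simp add: inexact_prox_def)
  also have "\<dots> \<le> ereal (1 / (2 * \<alpha>) * (norm (y - z))\<^sup>2) + h y + ereal \<epsilon>"
    by (intro add_right_mono INF_lower) simp
  finally show ?thesis .
qed

lemma inexact_prox_not_infinity:
  assumes "proper_fun h" "inexact_prox h \<alpha> \<epsilon> z u"
  shows "h u \<noteq> \<infinity>"
proof
  assume "h u = \<infinity>"
  obtain y where "h y \<noteq> \<infinity>"
    using assms(1) by (auto simp: proper_fun_def)
  with assms(1) obtain c where "h y = ereal c"
    by (rule proper_funE)
  then show False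
    using inexact_proxD[OF assms(2), of y] \<open>h u = \<infinity>\<close> by simp
qed

lemma quadratic_step_bound:
  fixes D a r :: real
  assumes "0 \<le> D" "0 \<le> a" "0 \<le> r"
    and step: "\<And>s. 0 < s \<Longrightarrow> s \<le> 1 \<Longrightarrow> 2 * s * D * (D - a) \<le> s\<^sup>2 * D\<^sup>2 + (1 + s) * r\<^sup>2"
  shows "D \<le> a + 2 * r"
proof (cases "D \<le> a")
  case False
  define s where "s = (D - a) / D"
  have "0 < s" "s \<le> 1" and sD: "s * D = D - a"
    using False assms(1,2) by (auto simp: s_def field_simps)
  moreover have "2 * s * D * (D - a) = 2 * (D - a)\<^sup>2" "s\<^sup>2 * D\<^sup>2 = (D - a)\<^sup>2"
    by (simp_all add: power2_eq_square flip: sD)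
  ultimately have "2 * (D - a)\<^sup>2 \<le> (D - a)\<^sup>2 + (1 + s) * r\<^sup>2"
    using step[of s] by simp
  moreover have "(1 + s) * r\<^sup>2 \<le> 2 * r\<^sup>2"
    using \<open>s \<le> 1\<close> by (intro mult_right_mono) auto
  ultimately have "(D - a)\<^sup>2 \<le> 2 * r\<^sup>2"
    by linarith
  also have "\<dots> \<le> (2 * r)\<^sup>2"
    by (simp add: power_mult_distrib)
  finally show ?thesis
    using assms(3) power2_le_imp_le[of "D - a" "2 * r"] by simp
qed (use assms in simp)

lemma inexact_prox_segment_inequality:
  fixes u x z p :: "'a::real_inner"
  assumes h_convex: "convex_fun h" and alpha_pos: "\<alpha> > 0"
    and u_prox: "inexact_prox h \<alpha> \<epsilon> z u" and p_sub: "p \<in> eps_subdiff h \<epsilon> x"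
    and hu: "h u = ereal hu" and hx: "h x = ereal hx"
    and s: "0 \<le> s" "s \<le> 1"
  shows "2 * s * inner (\<alpha> *\<^sub>R p + u - z) (u - x)
    \<le> s\<^sup>2 * (norm (u - x))\<^sup>2 + (1 + s) * (2 * \<alpha> * \<epsilon>)"
proof -
  define d where "d = u - x"
  define y where "y = (1 - s) *\<^sub>R u + s *\<^sub>R x"
  define c where "c = 1 / (2 * \<alpha>)"
  have "ereal (c * (norm (u - z))\<^sup>2) + h u \<le> ereal (c * (norm (y - z))\<^sup>2) + h y + ereal \<epsilon>"
    unfolding c_def by (rule inexact_proxD[OF u_prox])
  also have "\<dots> \<le> ereal (c * (norm (y - z))\<^sup>2) + ereal ((1 - s) * hu + s * hx) + ereal \<epsilon>"
    using convex_fun_le_combination[OF h_convex, of u hu x hx s] hu hx s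
    by (intro add_right_mono add_left_mono) (simp add: y_def)
  finally have prox: "c * (norm (u - z))\<^sup>2 + hu \<le> c * (norm (y - z))\<^sup>2 + ((1 - s) * hu + s * hx) + \<epsilon>"
    using hu by simp
  have yz: "y - z = (u - z) - s *\<^sub>R d"
    by (simp add: y_def d_def algebra_simps)
  have "(norm (y - z))\<^sup>2 = (norm (u - z))\<^sup>2 - 2 * s * inner (u - z) d + s\<^sup>2 * (norm d)\<^sup>2"
    unfolding yz power2_norm_eq_inner
    by (simp add: inner_diff_left inner_diff_right inner_commute power2_eq_square algebra_simps)
  with prox have "s * (hu - hx) \<le> c * (s\<^sup>2 * (norm d)\<^sup>2 - 2 * s * inner (u - z) d) + \<epsilon>"
    by (simp add: algebra_simps)
  moreover have "h x + ereal (inner p d - \<epsilon>) \<le> h u"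
    using p_sub by (simp add: eps_subdiff_def d_def)
  then have "s * (inner p d - \<epsilon>) \<le> s * (hu - hx)"
    using hu hx s(1) by (intro mult_left_mono) auto
  ultimately have "2 * \<alpha> * (s * (inner p d - \<epsilon>))
      \<le> 2 * \<alpha> * (c * (s\<^sup>2 * (norm d)\<^sup>2 - 2 * s * inner (u - z) d) + \<epsilon>)"
    using alpha_pos by (intro mult_left_mono) auto
  then show ?thesis
    using alpha_pos by (simp add: c_def d_def inner_add_left algebra_simps)
qed

lemma inexact_prox_dist_eps_subdiff_le:
  fixes u x z p :: "'a::real_inner"
  assumes h_convex: "convex_fun h" and h_proper: "proper_fun h"
    and alpha_pos: "\<alpha> > 0" and eps_nonneg: "\<epsilon> \<ge> 0"
    and u_prox: "inexact_prox h \<alpha> \<epsilon> z u" and p_sub: "p \<in> eps_subdiff h \<epsilon> x"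
  shows "norm (u - x) \<le> norm (\<alpha> *\<^sub>R p + x - z) + 2 * sqrt (2 * \<alpha> * \<epsilon>)"
proof (rule quadratic_step_bound)
  obtain hu where hu: "h u = ereal hu"
    using h_proper inexact_prox_not_infinity[OF h_proper u_prox] by (rule proper_funE)
  obtain hx where hx: "h x = ereal hx"
    using h_proper eps_subdiff_not_infinity[OF h_proper p_sub] by (rule proper_funE)
  define d where "d = u - x"
  define w where "w = \<alpha> *\<^sub>R p + x - z"
  fix s :: real assume s: "0 < s" "s \<le> 1"
  have "\<alpha> *\<^sub>R p + u - z = d + w"
    by (simp add: d_def w_def)
  with inexact_prox_segment_inequality[OF h_convex alpha_pos u_prox p_sub hu hx, of s] s
  have "2 * s * ((norm d)\<^sup>2 + inner w d) \<le> s\<^sup>2 * (norm d)\<^sup>2 + (1 + s) * (2 * \<alpha> * \<epsilon>)"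
    by (simp add: d_def inner_add_left inner_add_right power2_norm_eq_inner inner_commute)
  moreover have "2 * s * (- (norm w * norm d)) \<le> 2 * s * inner w d"
    using s norm_cauchy_schwarz[of "- w" d] by (intro mult_left_mono) auto
  ultimately show "2 * s * norm (u - x) * (norm (u - x) - norm w)
      \<le> s\<^sup>2 * (norm (u - x))\<^sup>2 + (1 + s) * (sqrt (2 * \<alpha> * \<epsilon>))\<^sup>2"
    using alpha_pos eps_nonneg by (simp add: d_def algebra_simps power2_eq_square)
qed (use alpha_pos eps_nonneg in auto)

lemma inexact_prox_gradient_step_dist:
  fixes x v e g y u G :: "'a::real_inner"
  assumes h_convex: "convex_fun h" and h_proper: "proper_fun h"
    and alpha_pos: "\<alpha> > 0" and eps_nonneg: "\<epsilon> \<ge> 0"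
    and y_sub: "(1 / \<alpha>) *\<^sub>R (x - \<alpha> *\<^sub>R (v + e) + g - y) \<in> eps_subdiff h \<epsilon> y"
    and g_bound: "norm g \<le> sqrt (2 * \<alpha> * \<epsilon>)"
    and u_prox: "inexact_prox h \<alpha> \<epsilon> (x - \<alpha> *\<^sub>R G) u"
  shows "norm (u - y) \<le> \<alpha> * norm (v - G) + \<alpha> * norm e + 3 * sqrt (2 * \<alpha> * \<epsilon>)"
proof -
  have "\<alpha> *\<^sub>R ((1 / \<alpha>) *\<^sub>R (x - \<alpha> *\<^sub>R (v + e) + g - y)) + y - (x - \<alpha> *\<^sub>R G)
      = g - \<alpha> *\<^sub>R (v - G) - \<alpha> *\<^sub>R e"
    using alpha_pos by (simp add: algebra_simps)
  with inexact_prox_dist_eps_subdiff_le[OF h_convex h_proper alpha_pos eps_nonneg u_prox y_sub]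
  have "norm (u - y) \<le> norm (g - \<alpha> *\<^sub>R (v - G) - \<alpha> *\<^sub>R e) + 2 * sqrt (2 * \<alpha> * \<epsilon>)"
    by simp
  also have "norm (g - \<alpha> *\<^sub>R (v - G) - \<alpha> *\<^sub>R e) \<le> norm g + \<alpha> * norm (v - G) + \<alpha> * norm e"
    using norm_triangle_ineq4[of "g - \<alpha> *\<^sub>R (v - G)" "\<alpha> *\<^sub>R e"]
      norm_triangle_ineq4[of g "\<alpha> *\<^sub>R (v - G)"] alpha_pos by simp
  finally show ?thesis
    using g_bound by simp
qed

lemma inner_gradient_error_le:
  fixes x v e g y u G :: "'a::real_inner"
  assumes h_convex: "convex_fun h" and h_proper: "proper_fun h"
    and alpha_pos: "\<alpha> > 0" and eps_nonneg: "\<epsilon> \<ge> 0"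
    and y_sub: "(1 / \<alpha>) *\<^sub>R (x - \<alpha> *\<^sub>R (v + e) + g - y) \<in> eps_subdiff h \<epsilon> y"
    and g_bound: "norm g \<le> sqrt (2 * \<alpha> * \<epsilon>)"
    and u_prox: "inexact_prox h \<alpha> \<epsilon> (x - \<alpha> *\<^sub>R G) u"
    and v_bound: "norm (v - G) \<le> M"
  shows "inner (v - G) (u - y)
    \<le> \<alpha> * (norm (v - G))\<^sup>2 + (\<alpha> * norm e + 3 * sqrt (2 * \<alpha> * \<epsilon>)) * M"
proof -
  define c where "c = \<alpha> * norm e + 3 * sqrt (2 * \<alpha> * \<epsilon>)"
  have "inner (v - G) (u - y) \<le> norm (v - G) * norm (u - y)"
    by (rule norm_cauchy_schwarz)
  also have "\<dots> \<le> norm (v - G) * (\<alpha> * norm (v - G) + c)"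
    using inexact_prox_gradient_step_dist[OF h_convex h_proper alpha_pos eps_nonneg y_sub g_bound u_prox]
    by (intro mult_left_mono) (auto simp: c_def)
  also have "\<dots> = \<alpha> * (norm (v - G))\<^sup>2 + norm (v - G) * c"
    by (simp add: power2_eq_square algebra_simps)
  also have "\<dots> \<le> \<alpha> * (norm (v - G))\<^sup>2 + c * M"
    using mult_right_mono[OF v_bound, of c] alpha_pos eps_nonneg by (simp add: c_def mult.commute)
  finally show ?thesis
    by (simp add: c_def)
qed

lemma composite_gradient_step_bound:
  fixes f :: "'a::real_inner \<Rightarrow> real"
  assumes f_convex: "convex_on UNIV f"
    and f_grad: "\<And>x. (f has_derivative (\<lambda>u. inner (gf x) u)) (at x)"
    and gf_lip: "L-lipschitz_on UNIV gf"
    and alpha_pos: "\<alpha> > 0" and alpha_L: "\<alpha> * L \<le> 1"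
    and xi_def: "\<xi> = (1 / \<alpha>) *\<^sub>R (x - y)"
    and y_sub: "hy + inner ((1 / \<alpha>) *\<^sub>R (x - \<alpha> *\<^sub>R (v + e) + g - y)) (w - y) - \<epsilon> \<le> hw"
  shows "f y + hy - (f w + hw) \<le> inner \<xi> (y - w) - inner (y - w) (e - (1 / \<alpha>) *\<^sub>R g)
    + inner (v - gf x) (w - y) + \<alpha> / 2 * (norm \<xi>)\<^sup>2 + \<epsilon>"
proof -
  have y_x: "y - x = - \<alpha> *\<^sub>R \<xi>"
    using alpha_pos by (simp add: xi_def)
  have "L / 2 * (norm (y - x))\<^sup>2 = (\<alpha> * L) * (\<alpha> / 2 * (norm \<xi>)\<^sup>2)"
    using alpha_pos by (simp add: y_x power_mult_distrib power2_eq_square)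
  also have "\<dots> \<le> \<alpha> / 2 * (norm \<xi>)\<^sup>2"
    using alpha_L alpha_pos mult_right_mono[OF alpha_L, of "\<alpha> / 2 * (norm \<xi>)\<^sup>2"] by simp
  finally have "f y \<le> f x + inner (gf x) (y - x) + \<alpha> / 2 * (norm \<xi>)\<^sup>2"
    using lipschitz_gradient_upper_bound[OF f_grad gf_lip, of y x] by linarith
  moreover have "f x + inner (gf x) (w - x) \<le> f w"
    by (rule convex_gradient_lower_bound[OF f_convex f_grad])
  moreover have "(1 / \<alpha>) *\<^sub>R (x - \<alpha> *\<^sub>R (v + e) + g - y) = \<xi> - v - (e - (1 / \<alpha>) *\<^sub>R g)"
    using alpha_pos by (simp add: xi_def algebra_simps)
  with y_sub have "hy + inner (\<xi> - v - (e - (1 / \<alpha>) *\<^sub>R g)) (w - y) - \<epsilon> \<le> hw"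
    by simp
  then have "hy - inner \<xi> (y - w) - inner v (w - y) + inner (y - w) (e - (1 / \<alpha>) *\<^sub>R g) - \<epsilon> \<le> hw"
    by (simp add: inner_diff_left inner_diff_right inner_commute diff_divide_distrib)
  moreover have "inner (gf x) (y - x) - inner (gf x) (w - x) = inner (gf x) (y - w)"
    by (simp add: inner_diff_right)
  moreover have "inner (v - gf x) (w - y) = inner v (w - y) + inner (gf x) (y - w)"
    by (simp add: inner_diff_left inner_diff_right)
  ultimately show ?thesis
    by linarith
qed

theorem proposition1:
  fixes f :: "'a::euclidean_space \<Rightarrow> real" and gf :: "'a \<Rightarrow> 'a"
    and h :: "'a \<Rightarrow> ereal" and F :: "'a \<Rightarrow> ereal"
    and L \<alpha> \<epsilon> M :: real
    and xs xprev v e q xk g \<xi> xu :: 'a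
  assumes f_convex: "convex_on UNIV f"
    and f_grad: "\<And>x. (f has_derivative (\<lambda>u. inner (gf x) u)) (at x)"
    and gf_lip: "L-lipschitz_on UNIV gf"
    and h_proper: "proper_fun h" and h_closed: "closed_fun h" and h_convex: "convex_fun h"
    and F_def: "\<And>x. F x = ereal (f x) + h x"
    and xs_min: "\<And>y. F xs \<le> F y"
    and alpha_pos: "\<alpha> > 0" and alpha_L: "\<alpha> * L \<le> 1"
    and eps_nonneg: "\<epsilon> \<ge> 0"
    and v_bound: "norm (v - gf xprev) \<le> M"
    and q_def: "q = xprev - \<alpha> *\<^sub>R (v + e)"
    and xk_prox: "inexact_prox h \<alpha> \<epsilon> q xk"
    and g_sub: "(1 / \<alpha>) *\<^sub>R (q + g - xk) \<in> eps_subdiff h \<epsilon> xk"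
    and g_bound: "norm g \<le> sqrt (2 * \<alpha> * \<epsilon>)"
    and xi_def: "\<xi> = (1 / \<alpha>) *\<^sub>R (xprev - xk)"
    and xu_prox: "inexact_prox h \<alpha> \<epsilon> (xprev - \<alpha> *\<^sub>R gf xprev) xu"
  shows "ereal (- \<alpha>\<^sup>2 * (norm \<xi>)\<^sup>2 - 2 * \<alpha> * inner \<xi> (xk - xs))
    \<le> ereal (- 2 * \<alpha>) * (F xk - F xs)
       + ereal (2 * \<alpha> * \<epsilon> + 2 * \<alpha>\<^sup>2 * (norm (v - gf xprev))\<^sup>2
          + (2 * \<alpha>\<^sup>2 * norm e + 6 * \<alpha> * sqrt (2 * \<alpha> * \<epsilon>)) * M
          - 2 * \<alpha> * inner (xk - xs) (e - (1 / \<alpha>) *\<^sub>R g)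
          - 2 * \<alpha> * inner (xu - xs) (v - gf xprev))"
proof -
  obtain hk where hk: "h xk = ereal hk"
    using h_proper eps_subdiff_not_infinity[OF h_proper g_sub] by (rule proper_funE)
  have "h xs \<noteq> \<infinity>"
    using xs_min[of xk] F_def[of xk] F_def[of xs] hk by auto
  with h_proper obtain hs where hs: "h xs = ereal hs"
    by (rule proper_funE)
  have "h xk + ereal (inner ((1 / \<alpha>) *\<^sub>R (q + g - xk)) (xs - xk) - \<epsilon>) \<le> h xs"
    using g_sub by (simp add: eps_subdiff_def)
  then have "f xk + hk - (f xs + hs) \<le> inner \<xi> (xk - xs) - inner (xk - xs) (e - (1 / \<alpha>) *\<^sub>R g)
      + inner (v - gf xprev) (xs - xk) + \<alpha> / 2 * (norm \<xi>)\<^sup>2 + \<epsilon>"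
    using hk hs q_def
    by (intro composite_gradient_step_bound[OF f_convex f_grad gf_lip alpha_pos alpha_L xi_def]) simp
  moreover have "inner (v - gf xprev) (xs - xk)
      = inner (v - gf xprev) (xu - xk) - inner (xu - xs) (v - gf xprev)"
    by (simp add: inner_diff_right inner_commute)
  moreover note inner_gradient_error_le[OF h_convex h_proper alpha_pos eps_nonneg
      g_sub[unfolded q_def] g_bound xu_prox v_bound]
  ultimately have "2 * \<alpha> * (f xk + hk - (f xs + hs)) \<le> 2 * \<alpha> * (inner \<xi> (xk - xs)
      - inner (xk - xs) (e - (1 / \<alpha>) *\<^sub>R g) - inner (xu - xs) (v - gf xprev)
      + \<alpha> / 2 * (norm \<xi>)\<^sup>2 + \<epsilon> + \<alpha> * (norm (v - gf xprev))\<^sup>2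
      + (\<alpha> * norm e + 3 * sqrt (2 * \<alpha> * \<epsilon>)) * M)"
    using alpha_pos by (intro mult_left_mono) auto
  then show ?thesis
    by (simp add: F_def hk hs algebra_simps power2_eq_square)
qed

end
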